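(* Let $V\ge3$, $I_1<I_2<I_3$, and suppose $x_2=I_2-I_1$ and $x_3=I_3-I_1$ are incommensurable ($x_2/x_3\notin\mathbb{Q}$). Let $\rho$ be a continuous, strictly positive probability density on $\mathbb{R}_+$ such that the system $(\rho_1,\rho_2,\rho_3)=(\rho,\rho,\rho)$ is admissible. Then there is $\beta>0$ with $\rho(T)=\beta e^{-\beta T}$ for all $T\ge0$.
   Context: For $I_v<I_w$, a pair of densities $(\rho_v,\rho_w)$ on $\mathbb{R}_+$ with corresponding random variables $\xi_v,\xi_w$ is admissible if the conditional density of $\xi_v-(I_w-I_v)$ given $\{\xi_v>I_w-I_v\}$ equals $\rho_w$. A system $(\rho_1,\dots,\rho_V)$ is admissible if each consecutive pair $(\rho_v,\rho_{v+1})$ is admissible. *)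

theory Defs
  imports "HOL-Analysis.Analysis"
begin

definition prob_density_Rplus :: "(real \<Rightarrow> real) \<Rightarrow> bool" where
  "prob_density_Rplus \<rho> \<longleftrightarrow> (\<forall>t\<ge>0. 0 \<le> \<rho> t) \<and> (\<rho> has_integral 1) {0..}"

definition tail_prob :: "(real \<Rightarrow> real) \<Rightarrow> real \<Rightarrow> real" where
  "tail_prob \<rho> a = integral {a<..} \<rho>"

text \<open>Admissible pair: for I_v < I_w, the conditional density of xi_v - (I_w - I_v) given
  xi_v > I_w - I_v, namely t \<mapsto> rho_v (t + (I_w - I_v)) / P(xi_v > I_w - I_v) on t \<ge> 0,
  equals rho_w (as densities, i.e. almost everywhere on [0,oo)).\<close>
definition admissible_pair ::
  "real \<Rightarrow> real \<Rightarrow> (real \<Rightarrow> real) \<Rightarrow> (real \<Rightarrow> real) \<Rightarrow> bool" where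
  "admissible_pair Iv Iw \<rho>v \<rho>w \<longleftrightarrow>
     Iv < Iw \<and> prob_density_Rplus \<rho>v \<and> prob_density_Rplus \<rho>w \<and>
     0 < tail_prob \<rho>v (Iw - Iv) \<and>
     (AE t in lborel. 0 \<le> t \<longrightarrow>
        \<rho>w t = \<rho>v (t + (Iw - Iv)) / tail_prob \<rho>v (Iw - Iv))"

definition admissible_system ::
  "nat \<Rightarrow> (nat \<Rightarrow> real) \<Rightarrow> (nat \<Rightarrow> real \<Rightarrow> real) \<Rightarrow> bool" where
  "admissible_system V I \<rho>s \<longleftrightarrow>
     (\<forall>v. 1 \<le> v \<and> v < V \<longrightarrow> admissible_pair (I v) (I (Suc v)) (\<rho>s v) (\<rho>s (Suc v)))"

end

theory Submission
  imports Defs "HOL-Analysis.Kronecker_Approximation_Theorem"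
begin

text \<open>
  Writing a = I 2 - I 1 and b = I 3 - I 2, admissibility of the constant system
  says, after upgrading the almost-everywhere identity to an everywhere one by continuity,
  that rho(t + a) = p rho(t) and rho(t + b) = q rho(t) for t \<ge> 0 with constants p, q > 0.
  Tilting by an exponential, f(t) = rho(t) exp(lam t) with exp(lam a) = 1/p, gives an
  a-periodic, continuous, positive function; such a function is bounded between two positive
  constants, which forces the multiplier of the b-shift of f to be 1.  Hence f is invariant
  under shifts by a and by b, and since b/a is irrational (this is exactly the hypothesis on
  I), Kronecker's theorem makes the shifts by b dense modulo a, so f is constant.  Thus
  rho(t) = C exp(-lam t), and the normalisation of rho to a probability density forces
  lam > 0 and C = lam.
\<close>

text \<open>Two functions continuous on [0,oo) that agree almost everywhere there agree everywhere
  there: a point of disagreement would give a whole open interval of disagreement.\<close>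
lemma continuous_AE_eq_imp_eq:
  fixes f g :: "real \<Rightarrow> real"
  assumes cf: "continuous_on {0..} f" and cg: "continuous_on {0..} g"
    and ae: "AE t in lborel. 0 \<le> t \<longrightarrow> f t = g t"
  shows "\<forall>t\<ge>0. f t = g t"
proof -
  have c: "continuous_on {0..} (\<lambda>x. f x - g x)"
    by (intro continuous_intros cf cg)
  have pos: "f t = g t" if "t > 0" for t
  proof (rule ccontr)
    assume ne: "f t \<noteq> g t"
    have "open ({0<..} \<inter> (\<lambda>x. f x - g x) -` (-{0}))"
      by (rule continuous_open_preimage[OF continuous_on_subset[OF c]]) auto
    moreover have "t \<in> {0<..} \<inter> (\<lambda>x. f x - g x) -` (-{0})"
      using that ne by auto
    ultimately obtain e where e: "e > 0" "ball t e \<subseteq> {0<..} \<inter> (\<lambda>x. f x - g x) -` (-{0})"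
      by (meson open_contains_ball)
    from ae obtain N where N: "{x \<in> space lborel. \<not> (0 \<le> x \<longrightarrow> f x = g x)} \<subseteq> N"
        "emeasure lborel N = 0" "N \<in> sets lborel"
      by (rule AE_E)
    have "{t-e<..<t+e} \<subseteq> N"
    proof
      fix x assume "x \<in> {t-e<..<t+e}"
      then have "x \<in> ball t e" by (auto simp: dist_real_def)
      then have "x > 0" "f x \<noteq> g x" using e by auto
      then show "x \<in> N" using N(1) by auto
    qed
    then have "emeasure lborel {t-e<..<t+e} \<le> emeasure lborel N"
      by (rule emeasure_mono[OF _ N(3)])
    then show False using N(2) e by simp
  qed
  have "continuous (at 0 within {0..}) (\<lambda>x. f x - g x)"
    using c by (simp add: continuous_on_eq_continuous_within)
  then have "((\<lambda>x. f x - g x) \<longlongrightarrow> f 0 - g 0) (at_right 0)"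
    unfolding continuous_within by (rule tendsto_within_subset) auto
  moreover have "eventually (\<lambda>x. f x - g x = 0) (at_right (0::real))"
    using eventually_at_right_less[of "0::real"] by (rule eventually_mono) (simp add: pos)
  ultimately have "((\<lambda>x. 0) \<longlongrightarrow> f 0 - g 0) (at_right (0::real))"
    by (rule Lim_transform_eventually)
  then have "f 0 - g 0 = 0"
    using tendsto_const tendsto_unique trivial_limit_at_right_real by blast
  then have "f 0 = g 0" by simp
  then show ?thesis using pos by (metis less_eq_real_def)
qed

text \<open>For a constant system, admissibility of the pair (I_v, I_w) says precisely that
  shifting rho by I_w - I_v multiplies it by the positive constant P(xi > I_w - I_v).\<close>
lemma admissible_pair_self_shift:
  assumes adm: "admissible_pair u w \<rho> \<rho>" and cont: "continuous_on {0..} \<rho>"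
  shows "\<exists>p>0. \<forall>t\<ge>0. \<rho> (t + (w - u)) = p * \<rho> t"
proof -
  define p where "p = tail_prob \<rho> (w - u)"
  have p0: "p > 0" and uw: "u < w"
    and ae: "AE t in lborel. 0 \<le> t \<longrightarrow> \<rho> t = \<rho> (t + (w - u)) / p"
    using adm unfolding admissible_pair_def p_def by auto
  have "continuous_on {0..} (\<lambda>t. \<rho> (t + (w - u)))"
    by (rule continuous_on_compose2[OF cont]) (use uw in \<open>auto intro!: continuous_intros\<close>)
  then have "continuous_on {0..} (\<lambda>t. \<rho> (t + (w - u)) / p)"
    by (intro continuous_intros) (use p0 in auto)
  from continuous_AE_eq_imp_eq[OF cont this ae] p0
  show ?thesis by (auto simp: field_simps)
qed

lemma shift_iter:
  fixes f :: "real \<Rightarrow> real"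
  assumes "b \<ge> 0" "\<forall>t\<ge>0. f (t + b) = r * f t" "t \<ge> 0"
  shows "f (t + real n * b) = r ^ n * f t"
proof (induction n)
  case 0 then show ?case by simp
next
  case (Suc n)
  have "f (t + real (Suc n) * b) = f ((t + real n * b) + b)" by (simp add: algebra_simps)
  also have "\<dots> = r * f (t + real n * b)" using assms by simp
  finally show ?case using Suc by simp
qed

lemma periodic_reduce:
  fixes f :: "real \<Rightarrow> real"
  assumes "a > 0" "\<forall>t\<ge>0. f (t + a) = f t" "x \<ge> 0"
  shows "f x = f (frac (x/a) * a)"
proof -
  have shifted: "f (y + real n * a) = f y" if "y \<ge> 0" for y n
    using shift_iter[of a f 1 y n] assms that by simp
  have "x = frac (x/a) * a + real (nat \<lfloor>x/a\<rfloor>) * a"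
    using assms by (simp add: frac_def algebra_simps)
  moreover have "frac (x/a) * a \<ge> 0" using assms by (simp add: frac_ge_0)
  ultimately show ?thesis using shifted by metis
qed

lemma frac_times_in_Icc: "(a::real) > 0 \<Longrightarrow> frac x * a \<in> {0..a}"
  by (auto simp: frac_ge_0 less_imp_le[OF frac_lt_1])

text \<open>A continuous, positive, periodic function on [0,oo) is bounded between two positive
  constants (its minimum and maximum over one period).\<close>
lemma periodic_continuous_bounds:
  fixes f :: "real \<Rightarrow> real"
  assumes a: "a > 0" and per: "\<forall>t\<ge>0. f (t + a) = f t"
    and cont: "continuous_on {0..} f" and pos: "\<forall>t\<ge>0. f t > 0"
  shows "\<exists>m M. 0 < m \<and> (\<forall>t\<ge>0. m \<le> f t \<and> f t \<le> M)"
proof -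
  have cfa: "continuous_on {0..a} f" by (rule continuous_on_subset[OF cont]) auto
  obtain xm where xm: "xm \<in> {0..a}" "\<forall>y\<in>{0..a}. f xm \<le> f y"
    using continuous_attains_inf[OF compact_Icc _ cfa] a by auto
  obtain xM where xM: "xM \<in> {0..a}" "\<forall>y\<in>{0..a}. f y \<le> f xM"
    using continuous_attains_sup[OF compact_Icc _ cfa] a by auto
  have bounds: "f xm \<le> f t \<and> f t \<le> f xM" if "t \<ge> 0" for t
  proof -
    have "f t = f (frac (t/a) * a)" by (rule periodic_reduce[OF a per that])
    moreover have "frac (t/a) * a \<in> {0..a}" by (rule frac_times_in_Icc[OF a])
    ultimately show ?thesis using xm(2) xM(2) by simp
  qed
  have "f xm > 0" using pos xm(1) by simp
  then show ?thesis
    using bounds by (intro exI[of _ "f xm"] exI[of _ "f xM"] conjI allI impI) auto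
qed

text \<open>If f is bounded between positive constants, a relation f(t + b) = r f(t) is only
  possible with r = 1, since otherwise r^n f(0) = f(n b) would escape the bounds.\<close>
lemma bounded_mult_shift_factor_one:
  fixes f :: "real \<Rightarrow> real"
  assumes b: "b \<ge> 0" and shift: "\<forall>t\<ge>0. f (t + b) = r * f t"
    and m: "0 < m" and bnd: "\<forall>t\<ge>0. m \<le> f t \<and> f t \<le> M"
  shows "r = 1"
proof -
  have rn: "f (real n * b) = r ^ n * f 0" for n
    using shift_iter[OF b shift, of 0 n] by simp
  have f0: "f 0 > 0" using bnd m by force
  have bnd_n: "m \<le> r ^ n * f 0 \<and> r ^ n * f 0 \<le> M" for n
    using bnd[rule_format, of "real n * b"] b rn[of n] by simp
  have "0 < r * f 0" using bnd_n[of 1] m by simp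
  then have r0: "r > 0" using f0 by (simp add: zero_less_mult_iff)
  show "r = 1"
  proof (rule ccontr)
    assume "r \<noteq> 1"
    then consider "r > 1" | "r < 1" by linarith
    then show False
    proof cases
      case 1
      obtain n where "M / f 0 < r ^ n" using real_arch_pow[OF 1] by blast
      then show False using bnd_n[of n] f0 by (simp add: field_simps)
    next
      case 2
      obtain n where "r ^ n < m / f 0" using real_arch_pow_inv[of "m / f 0" r] 2 m f0 by auto
      then show False using bnd_n[of n] f0 by (simp add: field_simps)
    qed
  qed
qed

text \<open>A continuous function on [0,oo) invariant under shifts by a and by b, with b/a
  irrational, is constant: the points frac(n b/a) a are dense in [0,a] (Kronecker).\<close>
lemma two_periods_incommensurable_const:
  fixes f :: "real \<Rightarrow> real"
  assumes a: "a > 0" and b: "b \<ge> 0" and irr: "b / a \<notin> \<rat>"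
    and cont: "continuous_on {0..} f"
    and per_a: "\<forall>t\<ge>0. f (t + a) = f t" and per_b: "\<forall>t\<ge>0. f (t + b) = f t"
  shows "\<forall>t\<ge>0. f t = f 0"
proof -
  have dense_pts: "f (frac (real n * (b / a)) * a) = f 0" for n
  proof -
    have "f (real n * b) = f 0"
      using shift_iter[OF b, of f 1 0 n] per_b by simp
    moreover have "f (real n * b) = f (frac (real n * b / a) * a)"
      using periodic_reduce[OF a per_a, of "real n * b"] b by simp
    ultimately show ?thesis by simp
  qed
  have const01: "f (s * a) = f 0" if s: "s \<in> {0..1}" for s
  proof (rule ccontr)
    assume ne: "f (s * a) \<noteq> f 0"
    define e where "e = dist (f 0) (f (s * a))"
    have e0: "e > 0" using ne by (simp add: e_def)
    have "continuous_on {0..1} (\<lambda>u. f (u * a))"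
      by (rule continuous_on_compose2[OF cont]) (use a in \<open>auto intro!: continuous_intros\<close>)
    then obtain d where d: "d > 0"
        "\<forall>x\<in>{0..1}. dist x s < d \<longrightarrow> dist (f (x * a)) (f (s * a)) < e"
      using s e0 unfolding continuous_on_iff by blast
    obtain k where k: "\<bar>frac (real k * (b / a)) - s\<bar> < d"
      using Kronecker_approx_1_explicit[OF irr, of s d] s d(1) by auto
    have "frac (real k * (b / a)) \<in> {0..1}"
      by (auto simp: frac_ge_0 less_imp_le[OF frac_lt_1])
    then have "dist (f (frac (real k * (b / a)) * a)) (f (s * a)) < e"
      using d k by (auto simp: dist_real_def)
    then show False using dense_pts[of k] by (simp add: e_def)
  qed
  show ?thesis
  proof (intro allI impI)
    fix t :: real assume "t \<ge> 0"
    then have "f t = f (frac (t/a) * a)" by (rule periodic_reduce[OF a per_a])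
    also have "\<dots> = f 0"
      using const01[of "frac (t/a)"] by (simp add: frac_ge_0 less_imp_le[OF frac_lt_1])
    finally show "f t = f 0" .
  qed
qed

lemma two_mult_shifts_exponential:
  fixes \<rho> :: "real \<Rightarrow> real"
  assumes a: "a > 0" and b: "b > 0" and irr: "b / a \<notin> \<rat>"
    and cont: "continuous_on {0..} \<rho>" and pos: "\<forall>t\<ge>0. \<rho> t > 0"
    and p: "p > 0" and shift_a: "\<forall>t\<ge>0. \<rho> (t + a) = p * \<rho> t"
    and shift_b: "\<forall>t\<ge>0. \<rho> (t + b) = q * \<rho> t"
  shows "\<exists>lam. \<forall>t\<ge>0. \<rho> t = \<rho> 0 * exp (- lam * t)"
proof -
  define lam where "lam = - ln p / a"
  define f where "f t = \<rho> t * exp (lam * t)" for t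
  have ela: "exp (lam * a) = 1 / p"
    using a p by (simp add: lam_def exp_minus inverse_eq_divide)
  have per_a: "\<forall>t\<ge>0. f (t + a) = f t"
    using shift_a ela p by (simp add: f_def distrib_left exp_add)
  have shift_f: "\<forall>t\<ge>0. f (t + b) = (q * exp (lam * b)) * f t"
    using shift_b by (simp add: f_def distrib_left exp_add)
  have cf: "continuous_on {0..} f"
    unfolding f_def by (intro continuous_intros cont)
  have fpos: "\<forall>t\<ge>0. f t > 0" using pos by (simp add: f_def)
  obtain m M where "0 < m" "\<forall>t\<ge>0. m \<le> f t \<and> f t \<le> M"
    using periodic_continuous_bounds[OF a per_a cf fpos] by blast
  then have "q * exp (lam * b) = 1"
    using bounded_mult_shift_factor_one[OF _ shift_f] b by simp
  then have per_b: "\<forall>t\<ge>0. f (t + b) = f t"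
    using shift_f by (simp only: mult_1)
  have const: "\<forall>t\<ge>0. f t = f 0"
    by (rule two_periods_incommensurable_const[OF a _ irr cf per_a per_b]) (use b in simp)
  have "\<rho> t = \<rho> 0 * exp (- lam * t)" if "t \<ge> 0" for t
  proof -
    have "\<rho> t * exp (lam * t) = \<rho> 0" using const that by (simp add: f_def)
    then show ?thesis by (simp add: field_simps exp_minus)
  qed
  then show ?thesis by blast
qed

text \<open>A probability density on [0,oo) of the form C exp(-lam t) with C > 0 is the
  exponential density: lam > 0 (otherwise the total mass is infinite) and C = lam.\<close>
lemma exponential_density_normalised:
  fixes \<rho> :: "real \<Rightarrow> real"
  assumes int1: "(\<rho> has_integral 1) {0..}" and C: "C > 0"
    and form: "\<forall>t\<ge>0. \<rho> t = C * exp (- lam * t)"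
  shows "lam > 0 \<and> C = lam"
proof -
  have lam0: "lam > 0"
  proof (rule ccontr)
    assume "\<not> lam > 0"
    then have ge: "\<rho> t \<ge> C" if "t \<ge> 0" for t
      using form that C by (simp add: mult_nonpos_nonneg)
    obtain n :: nat where n: "1 / C < real n" using reals_Archimedean2 by blast
    have "(\<lambda>x. C * exp (- lam * x)) integrable_on {0..real n}"
      by (intro integrable_continuous_interval continuous_intros)
    then have i1: "\<rho> integrable_on {0..real n}"
      using integrable_cong[of "{0..real n}" \<rho>] form by simp
    have "integral {0..real n} (\<lambda>_. C) \<le> integral {0..real n} \<rho>"
      by (rule integral_le) (use i1 ge in auto)
    also have "\<dots> \<le> integral {0..} \<rho>"
      by (rule integral_subset_le) (use i1 int1 ge C in \<open>auto intro: order.trans[OF less_imp_le]\<close>)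
    also have "\<dots> = 1" using int1 by (simp add: integral_unique)
    finally have "real n * C \<le> 1" by simp
    then show False using n C by (simp add: field_simps)
  qed
  have "((\<lambda>x. C * exp (- lam * x)) has_integral C * (exp (- lam * 0) / lam)) {0..}"
    by (rule has_integral_mult_right[OF has_integral_exp_minus_to_infinity[OF lam0]])
  then have "(\<rho> has_integral C / lam) {0..}"
    using has_integral_cong[of "{0..}" \<rho> "\<lambda>x. C * exp (- lam * x)"] form by simp
  then have "C / lam = 1" using int1 has_integral_unique by blast
  then show ?thesis using lam0 by (simp add: field_simps)
qed

theorem theorem6:
  fixes V :: nat and I :: "nat \<Rightarrow> real" and \<rho> :: "real \<Rightarrow> real"
  assumes "V \<ge> 3"
    and "I 1 < I 2" and "I 2 < I 3"
    and "(I 2 - I 1) / (I 3 - I 1) \<notin> \<rat>"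
    and "continuous_on {0..} \<rho>"
    and "\<forall>t\<ge>0. 0 < \<rho> t"
    and "prob_density_Rplus \<rho>"
    and "admissible_system 3 I (\<lambda>_. \<rho>)"
  shows "\<exists>\<beta>>0. \<forall>T\<ge>0. \<rho> T = \<beta> * exp (- \<beta> * T)"
proof -
  have pairs: "admissible_pair (I v) (I (Suc v)) \<rho> \<rho>" if "1 \<le> v" "v < 3" for v
    using assms(8) that unfolding admissible_system_def by blast
  obtain p where p: "p > 0" "\<forall>t\<ge>0. \<rho> (t + (I 2 - I 1)) = p * \<rho> t"
    using admissible_pair_self_shift[OF pairs[of 1] assms(5)]
    by (auto simp: numeral_2_eq_2)
  obtain q where q: "\<forall>t\<ge>0. \<rho> (t + (I 3 - I 2)) = q * \<rho> t"
    using admissible_pair_self_shift[OF pairs[of 2] assms(5)]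
    by (auto simp: numeral_2_eq_2 numeral_3_eq_3)
  have irr: "(I 3 - I 2) / (I 2 - I 1) \<notin> \<rat>"
  proof
    assume "(I 3 - I 2) / (I 2 - I 1) \<in> \<rat>"
    then have "1 + (I 3 - I 2) / (I 2 - I 1) \<in> \<rat>" by (rule Rats_add[OF Rats_1])
    then have "1 / (1 + (I 3 - I 2) / (I 2 - I 1)) \<in> \<rat>" by (rule Rats_divide[OF Rats_1])
    moreover have "1 / (1 + (I 3 - I 2) / (I 2 - I 1)) = (I 2 - I 1) / (I 3 - I 1)"
      using assms(2,3) by (simp add: field_simps)
    ultimately show False using assms(4) by simp
  qed
  have "I 2 - I 1 > 0" "I 3 - I 2 > 0" using assms(2,3) by simp_all
  from two_mult_shifts_exponential[OF this irr assms(5,6) p q]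
  obtain lam where form: "\<forall>t\<ge>0. \<rho> t = \<rho> 0 * exp (- lam * t)" by blast
  have "(\<rho> has_integral 1) {0..}" "\<rho> 0 > 0"
    using assms(6,7) by (simp_all add: prob_density_Rplus_def)
  from exponential_density_normalised[OF this form]
  have "lam > 0" "\<rho> 0 = lam" by simp_all
  with form show ?thesis by auto
qed

end
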